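(* For CTS-G with exploration rate $\gamma>0$ in the sleeping semi-bandit problem, in each round $t\ge\max\{\sqrt m,4\}$ and given any $\Theta_t$, $$\frac{1}{\Pr_{\Theta_t}\Big(\sum_{a\in A_t^*}w_{a,t}\ge\sum_{a\in A_t^*}r_a\Big)}\le 2\,\Phi\big(-\sqrt{4/\gamma}\big)^{-1},$$ where $\Phi$ is the standard Gaussian cdf and $\Pr_{\Theta_t}(\cdot):=\Pr(\cdot\mid\Theta_t)$.
   Context: Sleeping semi-bandit problem: $N\ge2$ base arms $[N]$, arm $a$ has reward distribution $p_a$ on $[0,1]$ with mean $r_a$; $\Theta\subseteq 2^{[N]}$ feasible super arms, $m:=\max_{A\in\Theta}|A|$. Each round $t=1,\dots,T$ a (possibly adversarial) $\Theta_t\subseteq\Theta$ is revealed, the agent plays $A_t\in\Theta_t$ and observes independent $X_{a,t}\sim p_a$ for $a\in A_t$. $A_t^*\in\arg\max_{A\in\Theta_t}\sum_{a\in A}r_a$. $n_{a,t}:=\sum_{\tau<t}\mathbf{1}[a\in A_\tau]$, $\hat r_{a,n_{a,t}}$ the empirical mean of observed rewards of $a$ before round $t$ ($0$ if none). CTS-G: each round draw independently $w_{a,t}\sim\mathcal{N}\big(\hat r_{a,n_{a,t}},\frac{\gamma m\ln t}{n_{a,t}+1}\big)$ for all $a$ and play $A_t\in\arg\max_{A\in\Theta_t}\sum_{a\in A}w_{a,t}$. *)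

theory Defs
  imports "HOL-Probability.Probability"
begin

text \<open>Reward-table model: X (a,k) is the (k+1)-th observed reward of arm a (k = 0,1,...),
  Z (a,t) is the standard Gaussian noise used for arm a in round t (rounds start at 1).
  A history is the list of super arms played in rounds 1,2,...\<close>

definition n_plays :: "'a set list \<Rightarrow> 'a \<Rightarrow> nat" where
  "n_plays hs a = length (filter (\<lambda>A. a \<in> A) hs)"

definition emp_mean :: "('a \<times> nat \<Rightarrow> real) \<Rightarrow> 'a set list \<Rightarrow> 'a \<Rightarrow> real" where
  "emp_mean X hs a = (\<Sum>k<n_plays hs a. X (a, k)) / real (n_plays hs a)"

text \<open>w_{a,t} = rhat + sqrt(gamma m ln t / (n+1)) * Z, i.e. N(rhat, gamma m ln t/(n+1)).\<close>
definition ctsg_sample ::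
  "real \<Rightarrow> nat \<Rightarrow> ('a \<times> nat \<Rightarrow> real) \<Rightarrow> ('a \<times> nat \<Rightarrow> real) \<Rightarrow> 'a set list \<Rightarrow> nat \<Rightarrow> 'a \<Rightarrow> real" where
  "ctsg_sample \<gamma> m X Z hs t a =
     emp_mean X hs a + sqrt (\<gamma> * real m * ln (real t) / (real (n_plays hs a) + 1)) * Z (a, t)"

text \<open>History after rounds 1..t; sel t w is the (tie-broken) argmax over Theta_t of the sampled sums.\<close>
fun ctsg_hist ::
  "real \<Rightarrow> nat \<Rightarrow> (nat \<Rightarrow> ('a \<Rightarrow> real) \<Rightarrow> 'a set) \<Rightarrow> ('a \<times> nat \<Rightarrow> real) \<Rightarrow> ('a \<times> nat \<Rightarrow> real)
   \<Rightarrow> nat \<Rightarrow> 'a set list" where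
  "ctsg_hist \<gamma> m sel X Z 0 = []"
| "ctsg_hist \<gamma> m sel X Z (Suc t) =
     (let hs = ctsg_hist \<gamma> m sel X Z t in hs @ [sel (Suc t) (ctsg_sample \<gamma> m X Z hs (Suc t))])"

definition bandit_space ::
  "('a \<Rightarrow> real measure) \<Rightarrow> (('a \<times> nat \<Rightarrow> real) \<times> ('a \<times> nat \<Rightarrow> real)) measure" where
  "bandit_space p = (PiM UNIV (\<lambda>ak. p (fst ak))) \<Otimes>\<^sub>M (PiM UNIV (\<lambda>_. std_normal_distribution))"

definition std_normal_cdf :: "real \<Rightarrow> real" where
  "std_normal_cdf x = cdf std_normal_distribution x"

end

theory Submission
  imports Defs
begin

text \<open>
  Condition on the reward table. By Hoeffding's inequality and a union bound over the at most
  m t \<le> t^3 pairs (a, n) with a \<in> Astar and n < t, with probability at least 3/4 every arm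
  of Astar that has been played n times has empirical mean at least r a - sqrt (2 ln t / n).
  On this event, fix moreover the noise of all rounds other than t: this fixes the history, so the
  sum of the round-t samples over Astar is Gaussian, with variance the sum of the
  \<gamma> m ln t / (n a + 1). By Cauchy-Schwarz and card Astar \<le> m, the sum of the r a exceeds the
  mean of this Gaussian by at most sqrt (4/\<gamma>) standard deviations, so the sample sum reaches it
  with probability at least \<Phi>(-sqrt (4/\<gamma>)). By Fubini, the probability P of the event is at
  least (3/4) \<Phi>(-sqrt (4/\<gamma>)), hence 1/P \<le> 2/\<Phi>(-sqrt (4/\<gamma>)).
\<close>

section \<open>Products of probability spaces\<close>

lemma distr_merge_PiM_eq_PiM:
  fixes M :: "'i \<Rightarrow> 'b measure"
  assumes M: "\<And>i. prob_space (M i)" and JK: "J \<inter> K = {}"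
  shows "distr (PiM J M \<Otimes>\<^sub>M PiM K M) (PiM (J \<union> K) M) (merge J K) = PiM (J \<union> K) M"
proof (rule measure_eqI_PiM_infinite[symmetric, OF refl])
  interpret PK: prob_space "PiM K M" using M by (intro prob_space_PiM) auto
  interpret PU: prob_space "PiM (J \<union> K) M" using M by (intro prob_space_PiM) auto
  show "finite_measure (PiM (J \<union> K) M)" by unfold_locales
  fix A F assume F: "finite F" "F \<subseteq> J \<union> K" and A: "\<And>i. i \<in> F \<Longrightarrow> A i \<in> sets (M i)"
  let ?X = "prod_emb (J \<union> K) M F (Pi\<^sub>E F A)"
  let ?XJ = "prod_emb J M (F \<inter> J) (Pi\<^sub>E (F \<inter> J) A)" and ?XK = "prod_emb K M (F \<inter> K) (Pi\<^sub>E (F \<inter> K) A)"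
  have "PiM (J \<union> K) M ?X = (\<Prod>i\<in>(F \<inter> J) \<union> (F \<inter> K). M i (A i))"
    using M F A by (subst emeasure_PiM_emb) (auto intro!: prod.cong)
  also have "\<dots> = (\<Prod>i\<in>F \<inter> J. M i (A i)) * (\<Prod>i\<in>F \<inter> K. M i (A i))"
    using F JK by (intro prod.union_disjoint) auto
  also have "\<dots> = PiM J M ?XJ * PiM K M ?XK"
    using M F A by (subst (1 2) emeasure_PiM_emb) auto
  also have "\<dots> = (PiM J M \<Otimes>\<^sub>M PiM K M) (?XJ \<times> ?XK)"
    using F A by (intro PK.emeasure_pair_measure_Times[symmetric] sets_PiM_I) auto
  also have "?XJ \<times> ?XK = merge J K -` ?X \<inter> space (PiM J M \<Otimes>\<^sub>M PiM K M)"
    using JK F unfolding set_eq_iff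
    by (auto simp: prod_emb_def space_pair_measure space_PiM PiE_iff merge_def extensional_def
        split: if_splits)
  finally show "PiM (J \<union> K) M ?X = distr (PiM J M \<Otimes>\<^sub>M PiM K M) (PiM (J \<union> K) M) (merge J K) ?X"
    using F A by (simp add: emeasure_distr sets_PiM_I measurable_merge)
qed simp

lemma emeasure_pair_measure_ge_sections:
  assumes N: "sigma_finite_measure N" and E: "E \<in> sets (M \<Otimes>\<^sub>M N)" and G: "G \<in> sets M"
    and sections: "\<And>x. x \<in> G \<Longrightarrow> c \<le> emeasure N (Pair x -` E)"
  shows "c * emeasure M G \<le> emeasure (M \<Otimes>\<^sub>M N) E"
proof -
  interpret N: sigma_finite_measure N by (fact N)
  have "c * emeasure M G = (\<integral>\<^sup>+x. c * indicator G x \<partial>M)"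
    using G by (simp add: nn_integral_cmult_indicator)
  also have "\<dots> \<le> (\<integral>\<^sup>+x. emeasure N (Pair x -` E) \<partial>M)"
    by (intro nn_integral_mono) (auto split: split_indicator intro: sections)
  also have "\<dots> = emeasure (M \<Otimes>\<^sub>M N) E"
    using E by (rule N.emeasure_pair_measure_alt[symmetric])
  finally show ?thesis .
qed

lemma emeasure_PiM_ge_sections:
  fixes M :: "'i \<Rightarrow> 'b measure"
  assumes M: "\<And>i. prob_space (M i)" and JI: "J \<inter> I = {}"
    and S: "S \<in> sets (PiM (J \<union> I) M)"
    and sections: "\<And>x. x \<in> space (PiM J M) \<Longrightarrow>
      c \<le> emeasure (PiM I M) {y \<in> space (PiM I M). merge J I (x, y) \<in> S}"
  shows "c \<le> emeasure (PiM (J \<union> I) M) S"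
proof -
  interpret PJ: prob_space "PiM J M" using M by (rule prob_space_PiM)
  interpret PI: prob_space "PiM I M" using M by (rule prob_space_PiM)
  let ?T = "merge J I -` S \<inter> space (PiM J M \<Otimes>\<^sub>M PiM I M)"
  have T: "?T \<in> sets (PiM J M \<Otimes>\<^sub>M PiM I M)"
    using S by (rule measurable_sets[OF measurable_merge])
  have "c * emeasure (PiM J M) (space (PiM J M)) \<le> emeasure (PiM J M \<Otimes>\<^sub>M PiM I M) ?T"
  proof (rule emeasure_pair_measure_ge_sections[OF _ T])
    show "c \<le> emeasure (PiM I M) (Pair x -` ?T)" if "x \<in> space (PiM J M)" for x
      using sections[OF that] that by (simp add: space_pair_measure vimage_def Int_def conj_commute)
  qed (auto intro: PI.sigma_finite_measure)
  also have "\<dots> = emeasure (distr (PiM J M \<Otimes>\<^sub>M PiM I M) (PiM (J \<union> I) M) (merge J I)) S"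
    using S by (simp add: emeasure_distr measurable_merge)
  finally show ?thesis
    using M JI by (simp add: distr_merge_PiM_eq_PiM PJ.emeasure_space_1)
qed

lemma indep_vars_PiM_components:
  fixes M :: "'i \<Rightarrow> 'b measure"
  assumes M: "\<And>i. prob_space (M i)" and I: "I \<noteq> {}" "I \<subseteq> K"
  shows "prob_space.indep_vars (PiM K M) M (\<lambda>i \<omega>. \<omega> i) I"
proof -
  interpret P: prob_space "PiM K M" by (intro prob_space_PiM M)
  have "distr (PiM K M) (PiM I M) (\<lambda>x. \<lambda>i\<in>I. x i) = PiM I M"
    using distr_PiM_reindex[of K M id I] M I by (simp add: Pi_iff subset_iff)
  moreover have "PiM I (\<lambda>i. distr (PiM K M) (M i) (\<lambda>x. x i)) = PiM I M"
    using I by (intro PiM_cong refl distr_PiM_component) (auto simp: M)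
  ultimately show ?thesis using I
    by (subst P.indep_vars_iff_distr_eq_PiM') (auto simp: measurable_component_singleton)
qed

section \<open>Gaussian tails\<close>

lemmas prob_space_std_normal = real_dist_normal_dist[THEN real_distribution.axioms(1)]

lemma std_normal_cdf_pos: "std_normal_cdf x > 0"
proof -
  interpret N: prob_space std_normal_distribution by (rule prob_space_std_normal)
  define f0 where "f0 = std_normal_density (\<bar>x\<bar> + 1)"
  have f0: "f0 > 0" unfolding f0_def by (simp add: normal_density_pos)
  have f0_le: "f0 \<le> std_normal_density y" if "y \<in> {x-1..x}" for y
  proof -
    have "y\<^sup>2 \<le> (\<bar>x\<bar> + 1)\<^sup>2" using that by (intro abs_le_square_iff[THEN iffD1]) auto
    then show ?thesis unfolding f0_def std_normal_density_def by (simp add: divide_right_mono)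
  qed
  have "ennreal f0 = (\<integral>\<^sup>+y. ennreal f0 * indicator {x-1..x} y \<partial>lborel)"
    by (simp add: nn_integral_cmult_indicator)
  also have "\<dots> \<le> (\<integral>\<^sup>+y. ennreal (std_normal_density y) * indicator {..x} y \<partial>lborel)"
    by (intro nn_integral_mono) (auto split: split_indicator simp: f0_le)
  also have "\<dots> = ennreal (std_normal_cdf x)"
    by (simp add: std_normal_cdf_def cdf_def emeasure_density N.emeasure_eq_measure[symmetric])
  finally show ?thesis using f0 by (simp add: ennreal_le_iff2)
qed

lemma measure_PiM_std_normal_weighted_sum_ge:
  fixes A :: "'i set" and \<sigma> :: "'i \<Rightarrow> real"
  assumes A: "finite A" "A \<noteq> {}" "A \<subseteq> K" and \<sigma>: "\<And>i. i \<in> A \<Longrightarrow> \<sigma> i > 0"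
    and D: "D \<le> c * sqrt (\<Sum>i\<in>A. (\<sigma> i)\<^sup>2)"
  shows "std_normal_cdf (-c) \<le> measure (PiM K (\<lambda>_. std_normal_distribution))
           {z \<in> space (PiM K (\<lambda>_. std_normal_distribution)). D \<le> (\<Sum>i\<in>A. \<sigma> i * z i)}"
proof -
  let ?N = "std_normal_distribution" and ?S = "\<lambda>z. \<Sum>i\<in>A. \<sigma> i * z i"
  let ?P = "PiM K (\<lambda>_. ?N)"
  interpret P: prob_space ?P by (intro prob_space_PiM prob_space_std_normal)
  have borel_N: "measurable ?N = measurable borel" by (intro ext measurable_cong_sets) auto
  have "P.indep_vars (\<lambda>_. ?N) (\<lambda>i z. z i) A"
    using indep_vars_PiM_components[of "\<lambda>_. ?N" A K] A prob_space_std_normal by simp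
  then have indep: "P.indep_vars (\<lambda>_. borel) (\<lambda>i z. \<sigma> i * z i) A"
    by (rule P.indep_vars_compose2) (simp add: borel_N)
  have component: "distributed ?P lborel (\<lambda>z. z i) std_normal_density" if "i \<in> K" for i
  proof -
    have "distr ?P lborel (\<lambda>z. z i) = distr ?P ?N (\<lambda>z. z i)" by (rule distr_cong) auto
    also have "\<dots> = ?N" using that by (intro distr_PiM_component prob_space_std_normal)
    finally show ?thesis
      using that measurable_component_singleton[of i K "\<lambda>_. ?N"]
      by (simp add: distributed_def borel_N)
  qed
  define sd where "sd = sqrt (\<Sum>i\<in>A. (\<sigma> i)\<^sup>2)"
  have sd: "sd > 0" unfolding sd_def using A \<sigma> by (intro real_sqrt_gt_zero sum_pos) (auto dest: \<sigma>)
  have scaled: "distributed ?P lborel (\<lambda>z. \<sigma> i * z i) (normal_density 0 (\<sigma> i))" if "i \<in> A" for i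
    using P.normal_density_affine[OF component[of i], where \<alpha>="\<sigma> i" and \<beta>=0] that A \<sigma>[OF that] by auto
  then have S: "distributed ?P lborel ?S (normal_density 0 sd)"
    using P.sum_indep_normal[OF A(1,2) indep \<sigma> scaled] by (simp add: sd_def)
  then have "distributed ?P lborel (\<lambda>z. 0 + (- 1 / sd) * ?S z)
      (normal_density (0 + (- 1 / sd) * 0) (\<bar>- 1 / sd\<bar> * sd))"
    using sd by (intro P.normal_density_affine) auto
  then have W: "distr ?P lborel (\<lambda>z. - ?S z / sd) = ?N" "(\<lambda>z. - ?S z / sd) \<in> borel_measurable ?P"
    using sd by (auto simp: distributed_def)
  have "std_normal_cdf (-c) = measure (distr ?P lborel (\<lambda>z. - ?S z / sd)) {..-c}"
    unfolding std_normal_cdf_def cdf_def W(1) ..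
  also have "\<dots> = measure ?P {z \<in> space ?P. - ?S z / sd \<le> -c}"
    using W(2) by (simp add: measure_distr vimage_def Int_def conj_commute)
  also have "\<dots> \<le> measure ?P {z \<in> space ?P. D \<le> ?S z}"
  proof (rule P.finite_measure_mono)
    have "D \<le> ?S z" if "- ?S z / sd \<le> -c" for z
      using that sd D unfolding sd_def[symmetric] by (simp add: field_simps)
    then show "{z \<in> space ?P. - ?S z / sd \<le> -c} \<subseteq> {z \<in> space ?P. D \<le> ?S z}" by auto
    have "?S \<in> borel_measurable ?P" using S by (simp add: distributed_def)
    then show "{z \<in> space ?P. D \<le> ?S z} \<in> P.events" by measurable
  qed
  finally show ?thesis .
qed

section \<open>Concentration of the reward table\<close>

lemma integral_ident_le_1:
  assumes "prob_space M" "sets M = sets borel" "measure M {0..1} = 1"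
  shows "(\<integral>x. x \<partial>M) \<le> (1::real)"
proof -
  interpret prob_space M by fact
  have AE: "AE x in M. x \<in> {0..1::real}" using assms(2,3) by (intro AE_prob_1) auto
  have "integrable M (\<lambda>x::real. x)"
    using AE by (intro integrable_const_bound[where B=1])
      (auto simp: measurable_cong_sets[OF assms(2) refl])
  then show ?thesis using AE by (intro integral_le_const) auto
qed

lemma Hoeffding_reward_table_le:
  fixes p :: "'a \<Rightarrow> real measure" and r :: "'a \<Rightarrow> real"
  assumes p_prob: "\<And>a. prob_space (p a)"
    and p_borel: "\<And>a. sets (p a) = sets borel"
    and p_supp: "\<And>a. measure (p a) {0..1} = 1"
    and r_mean: "\<And>a. r a = (\<integral>x. x \<partial>p a)"
    and n: "n \<ge> 1" and \<epsilon>: "\<epsilon> \<ge> 0"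
  shows "measure (PiM UNIV (\<lambda>ak. p (fst ak)))
           {X \<in> space (PiM UNIV (\<lambda>ak. p (fst ak))). (\<Sum>k<n. X (a, k)) \<le> real n * r a - \<epsilon>}
         \<le> exp (-2 * \<epsilon>\<^sup>2 / real n)"
proof -
  let ?M = "PiM UNIV (\<lambda>ak. p (fst ak))"
  interpret P: prob_space ?M by (intro prob_space_PiM p_prob)
  define I where "I = (\<lambda>k. (a, k)) ` {..<n}"
  have inj: "inj_on (\<lambda>k. (a, k)) {..<n}" by (auto simp: inj_on_def)
  have I: "finite I" "I \<noteq> {}" "card I = n"
    using n card_image[OF inj] by (auto simp: I_def)
  have borel_p: "measurable (p a) = measurable borel" for a
    by (intro ext measurable_cong_sets) (auto simp: p_borel)
  have "P.indep_vars (\<lambda>i. p (fst i)) (\<lambda>i \<omega>. \<omega> i) I"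
    using indep_vars_PiM_components[of "\<lambda>i. p (fst i)" I UNIV] p_prob I by simp
  then have indep: "P.indep_vars (\<lambda>_. borel) (\<lambda>i \<omega>. \<omega> i) I"
    by (rule P.indep_vars_compose2[where Y="\<lambda>i x. x"]) (simp add: borel_p)
  have bounded: "AE \<omega> in ?M. \<omega> i \<in> {0..1}" for i
  proof -
    interpret Pi: prob_space "p (fst i)" by (rule p_prob)
    have "AE x in p (fst i). x \<in> {0..1}" using p_supp p_borel by (intro Pi.AE_prob_1) auto
    then show ?thesis by (intro AE_PiM_component p_prob) auto
  qed
  have expectation: "P.expectation (\<lambda>\<omega>. \<omega> i) = r (fst i)" for i
  proof -
    have "P.expectation (\<lambda>\<omega>. \<omega> i) = integral\<^sup>L (distr ?M (p (fst i)) (\<lambda>\<omega>. \<omega> i)) (\<lambda>x. x)"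
      by (subst integral_distr) (auto simp: borel_p)
    also have "\<dots> = r (fst i)" by (subst distr_PiM_component) (auto simp: p_prob r_mean)
    finally show ?thesis .
  qed
  have mean: "(\<Sum>i\<in>I. P.expectation (\<lambda>\<omega>. \<omega> i)) = real n * r a"
    using I by (simp add: expectation I_def sum.reindex[OF inj])
  interpret H: Hoeffding_ineq ?M I "\<lambda>i \<omega>. \<omega> i" "\<lambda>_. 0" "\<lambda>_. 1" "real n * r a"
  proof unfold_locales
    show "AE \<omega> in ?M. \<omega> i \<in> {0..1}" for i by (rule bounded)
  qed (use I indep mean in auto)
  have "(\<Sum>i\<in>I. X i) = (\<Sum>k<n. X (a, k))" for X :: "'a \<times> nat \<Rightarrow> real"
    unfolding I_def by (simp add: sum.reindex[OF inj])
  then show ?thesis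
    using H.Hoeffding_ineq_le[OF \<epsilon>] I n by simp
qed

definition rewards_concentrated ::
  "('a \<Rightarrow> real) \<Rightarrow> real \<Rightarrow> 'a set \<Rightarrow> nat \<Rightarrow> ('a \<times> nat \<Rightarrow> real) \<Rightarrow> bool" where
  "rewards_concentrated r L A t X \<longleftrightarrow>
     (\<forall>a\<in>A. \<forall>n\<in>{1..<t}. real n * r a - sqrt (2 * real n * L) < (\<Sum>k<n. X (a, k)))"

lemma prob_rewards_concentrated_ge:
  fixes p :: "'a \<Rightarrow> real measure" and r :: "'a \<Rightarrow> real"
  assumes p_prob: "\<And>a. prob_space (p a)"
    and p_borel: "\<And>a. sets (p a) = sets borel"
    and p_supp: "\<And>a. measure (p a) {0..1} = 1"
    and r_mean: "\<And>a. r a = (\<integral>x. x \<partial>p a)"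
    and A: "finite A" and t: "t \<ge> 1"
  defines "M \<equiv> PiM UNIV (\<lambda>ak. p (fst ak))"
  shows "{X \<in> space M. rewards_concentrated r (ln t) A t X} \<in> sets M"
    and "1 - card A / real t ^ 3 \<le> measure M {X \<in> space M. rewards_concentrated r (ln t) A t X}"
proof -
  interpret P: prob_space M unfolding M_def by (intro prob_space_PiM p_prob)
  have [measurable]: "(\<lambda>X. X i) \<in> borel_measurable M" for i
    unfolding M_def using measurable_component_singleton[of i UNIV "\<lambda>ak. p (fst ak)"]
    by (simp add: measurable_cong_sets[OF refl p_borel])
  define bad where
    "bad = (\<lambda>(a, n). {X \<in> space M. (\<Sum>k<n. X (a, k)) \<le> real n * r a - sqrt (2 * real n * ln t)})"
  define Idx where "Idx = A \<times> {1..<t}"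
  have bad_sets: "bad i \<in> sets M" for i
    by (cases i) (simp add: bad_def)
  have Idx: "finite Idx" "card Idx \<le> card A * t"
    using A by (auto simp: Idx_def card_cartesian_product)
  have good_eq: "{X \<in> space M. rewards_concentrated r (ln t) A t X} = space M - (\<Union>i\<in>Idx. bad i)"
    by (force simp: rewards_concentrated_def bad_def Idx_def not_le)
  then show good_sets: "{X \<in> space M. rewards_concentrated r (ln t) A t X} \<in> sets M"
    using Idx bad_sets by (simp add: sets.Diff sets.finite_UN)
  have bad_le: "measure M (bad i) \<le> 1 / real t ^ 4" if i_Idx: "i \<in> Idx" for i
  proof -
    obtain a n where i: "i = (a, n)" and n: "n \<ge> 1" using i_Idx unfolding Idx_def by fastforce
    have "measure M (bad i) \<le> exp (-2 * (sqrt (2 * real n * ln t))\<^sup>2 / real n)"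
      unfolding i bad_def M_def prod.case using t
      by (intro Hoeffding_reward_table_le[OF p_prob p_borel p_supp r_mean n]) simp
    also have "\<dots> = exp (- 4 * ln t)" using n t by simp
    also have "\<dots> = 1 / exp (ln t) ^ 4"
      using exp_of_nat_mult[of 4 "ln t"] by (simp add: exp_minus inverse_eq_divide)
    also have "\<dots> = 1 / real t ^ 4" using t by simp
    finally show ?thesis .
  qed
  have "measure M (\<Union>i\<in>Idx. bad i) \<le> (\<Sum>i\<in>Idx. measure M (bad i))"
    using Idx bad_sets by (intro P.finite_measure_subadditive_finite) auto
  also have "\<dots> \<le> real (card Idx) * (1 / real t ^ 4)"
    using bad_le by (rule sum_bounded_above)
  also have "\<dots> \<le> real (card A * t) * (1 / real t ^ 4)"
    using Idx(2) by (intro mult_right_mono) (simp_all flip: of_nat_mult)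
  also have "\<dots> = card A / real t ^ 3" using t by (simp add: field_simps eval_nat_numeral)
  finally show "1 - card A / real t ^ 3 \<le> measure M {X \<in> space M. rewards_concentrated r (ln t) A t X}"
    unfolding good_eq using Idx bad_sets by (subst P.prob_compl) auto
qed

lemma mean_minus_emp_mean_le:
  assumes X: "rewards_concentrated r L A t X" and a: "a \<in> A"
    and r: "r a \<le> 1" and L: "L \<ge> 1/4" and plays: "n_plays hs a < t"
  shows "r a - emp_mean X hs a \<le> sqrt (4 * L / (real (n_plays hs a) + 1))"
proof (cases "n_plays hs a = 0")
  case True
  \<comment> \<open>an unplayed arm has empirical mean 0 / 0 = 0\<close>
  then have "emp_mean X hs a = 0" by (simp add: emp_mean_def)
  moreover have "1 \<le> sqrt (4 * L / (real (n_plays hs a) + 1))" using True L by simp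
  ultimately show ?thesis using r by linarith
next
  case False
  define n where "n = n_plays hs a"
  have n: "real n \<ge> 1" using False by (simp add: n_def)
  have "real n * r a - sqrt (2 * real n * L) < (\<Sum>k<n. X (a, k))"
    using X a n plays by (auto simp: rewards_concentrated_def n_def)
  then have "(real n * r a - (\<Sum>k<n. X (a, k))) / real n < sqrt (2 * real n * L) / real n"
    using n by (intro divide_strict_right_mono) auto
  then have "r a - emp_mean X hs a < sqrt (2 * real n * L) / real n"
    using n by (simp add: emp_mean_def n_def[symmetric] diff_divide_distrib)
  also have "\<dots> = sqrt (2 * L / real n)"
    using n by (simp add: real_sqrt_divide real_sqrt_mult power2_eq_square field_simps
        flip: real_sqrt_abs2 [of "real n"])
  also have "\<dots> \<le> sqrt (4 * L / (real n + 1))"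
    using n L by (simp add: field_simps)
  finally show ?thesis by (simp add: n_def)
qed

lemma sum_mean_minus_emp_mean_le:
  assumes X: "rewards_concentrated r L A t X" and A: "finite A" "card A \<le> m"
    and r: "\<And>a. r a \<le> 1" and L: "L \<ge> 1/4" and \<gamma>: "\<gamma> > 0"
    and plays: "\<And>a. n_plays hs a < t"
  shows "(\<Sum>a\<in>A. r a - emp_mean X hs a)
           \<le> sqrt (4/\<gamma>) * sqrt (\<Sum>a\<in>A. (sqrt (\<gamma> * real m * L / (real (n_plays hs a) + 1)))\<^sup>2)"
proof -
  define w where "w a = 4 * L / (real (n_plays hs a) + 1)" for a
  have w: "w a \<ge> 0" for a using L by (simp add: w_def)
  have "(\<Sum>a\<in>A. r a - emp_mean X hs a) \<le> (\<Sum>a\<in>A. 1 * sqrt (w a))"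
    using mean_minus_emp_mean_le[OF X _ r L plays] by (intro sum_mono) (simp add: w_def)
  also have "\<dots> \<le> sqrt ((\<Sum>a\<in>A. 1\<^sup>2) * (\<Sum>a\<in>A. (sqrt (w a))\<^sup>2))"
    by (rule real_le_rsqrt[OF Cauchy_Schwarz_ineq_sum])
  also have "\<dots> = sqrt (real (card A) * (\<Sum>a\<in>A. w a))"
    using w by simp
  also have "\<dots> \<le> sqrt (real m * (\<Sum>a\<in>A. w a))"
    using A w by (intro real_sqrt_le_mono mult_right_mono sum_nonneg) auto
  also have "\<dots> = sqrt (4/\<gamma> * (\<Sum>a\<in>A. (sqrt (\<gamma> * real m * L / (real (n_plays hs a) + 1)))\<^sup>2))"
    using \<gamma> L by (simp add: w_def sum_distrib_left field_simps)
  also have "\<dots> = sqrt (4/\<gamma>) * sqrt (\<Sum>a\<in>A. (sqrt (\<gamma> * real m * L / (real (n_plays hs a) + 1)))\<^sup>2)"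
    by (rule real_sqrt_mult)
  finally show ?thesis .
qed

section \<open>Histories of CTS-G\<close>

lemma n_plays_ctsg_hist_le: "n_plays (ctsg_hist \<gamma> m sel X Z s) a \<le> s"
proof -
  have "length (ctsg_hist \<gamma> m sel X Z s) = s" by (induction s) (auto simp: Let_def)
  then show ?thesis unfolding n_plays_def by (metis length_filter_le)
qed

lemma ctsg_hist_cong:
  assumes "\<And>a s'. s' \<le> s \<Longrightarrow> Z (a, s') = Z' (a, s')"
  shows "ctsg_hist \<gamma> m sel X Z s = ctsg_hist \<gamma> m sel X Z' s"
  using assms
proof (induction s)
  case (Suc s)
  have "ctsg_sample \<gamma> m X Z hs (Suc s) = ctsg_sample \<gamma> m X Z' hs (Suc s)" for hs
    using Suc.prems by (auto simp: ctsg_sample_def fun_eq_iff)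
  with Suc show ?case by (simp add: Let_def)
qed simp

lemma countable_UNIV_lists: "countable (UNIV :: 'a::finite set list set)"
  using countable_lists[OF countable_finite[OF finite_class.finite_UNIV]] by (simp add: lists_UNIV)

context
  fixes M :: "'b measure" and X Z :: "'b \<Rightarrow> 'a::finite \<times> nat \<Rightarrow> real"
  assumes X: "\<And>i. (\<lambda>\<omega>. X \<omega> i) \<in> borel_measurable M"
    and Z: "\<And>i. (\<lambda>\<omega>. Z \<omega> i) \<in> borel_measurable M"
begin

lemma borel_measurable_ctsg_sample:
  "(\<lambda>\<omega>. ctsg_sample \<gamma> m (X \<omega>) (Z \<omega>) hs s a) \<in> borel_measurable M"
  unfolding ctsg_sample_def emp_mean_def
  by (intro borel_measurable_add borel_measurable_times borel_measurable_divide borel_measurable_sum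
      borel_measurable_const X Z)

lemma measurable_ctsg_hist:
  assumes sel: "\<And>s. sel s \<in> measurable (PiM UNIV (\<lambda>_. borel)) (count_space UNIV)"
  shows "(\<lambda>\<omega>. ctsg_hist \<gamma> m sel (X \<omega>) (Z \<omega>) s) \<in> measurable M (count_space UNIV)"
proof (induction s)
  case (Suc s)
  have "(\<lambda>\<omega>. ctsg_sample \<gamma> m (X \<omega>) (Z \<omega>) hs (Suc s)) \<in> measurable M (PiM UNIV (\<lambda>_. borel))" for hs
    by (intro measurable_PiM_single' borel_measurable_ctsg_sample) auto
  then have "(\<lambda>\<omega>. sel (Suc s) (ctsg_sample \<gamma> m (X \<omega>) (Z \<omega>) hs (Suc s)))
      \<in> measurable M (count_space UNIV)" for hs
    using sel by (rule measurable_compose)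
  then have "(\<lambda>\<omega>. hs @ [sel (Suc s) (ctsg_sample \<gamma> m (X \<omega>) (Z \<omega>) hs (Suc s))])
      \<in> measurable M (count_space UNIV)" for hs
    by simp
  from measurable_compose_countable'[OF this Suc countable_UNIV_lists]
  show ?case by (simp add: Let_def)
qed simp

lemma borel_measurable_ctsg_sample_sum:
  assumes sel: "\<And>s. sel s \<in> measurable (PiM UNIV (\<lambda>_. borel)) (count_space UNIV)"
  shows "(\<lambda>\<omega>. \<Sum>a\<in>A. ctsg_sample \<gamma> m (X \<omega>) (Z \<omega>) (ctsg_hist \<gamma> m sel (X \<omega>) (Z \<omega>) s) t a)
           \<in> borel_measurable M"
proof -
  have "(\<lambda>\<omega>. \<Sum>a\<in>A. ctsg_sample \<gamma> m (X \<omega>) (Z \<omega>) hs t a) \<in> borel_measurable M" for hs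
    by (intro borel_measurable_sum borel_measurable_ctsg_sample)
  from measurable_compose_countable'[OF this measurable_ctsg_hist[OF sel] countable_UNIV_lists]
  show ?thesis .
qed

end

section \<open>The sample sum of a fixed super arm\<close>

lemma one_minus_inverse_le_ln: "(x::real) > 0 \<Longrightarrow> 1 - 1 / x \<le> ln x"
  using ln_le_minus_one[of "1 / x"] by (simp add: ln_div)

lemma prob_std_normal_ctsg_sample_sum_ge:
  fixes X :: "'a \<times> nat \<Rightarrow> real" and A :: "'a set"
  assumes X: "rewards_concentrated r (ln t) A t X"
    and A: "finite A" "A \<noteq> {}" "card A \<le> m" and r: "\<And>a. r a \<le> 1" and \<gamma>: "\<gamma> > 0" and t: "t \<ge> 2"
    and plays: "\<And>a. n_plays hs a < t" and K: "\<And>a. (a, t) \<in> K"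
  shows "std_normal_cdf (- sqrt (4/\<gamma>)) \<le> measure (PiM K (\<lambda>_. std_normal_distribution))
           {z \<in> space (PiM K (\<lambda>_. std_normal_distribution)). (\<Sum>a\<in>A. r a)
              \<le> (\<Sum>a\<in>A. emp_mean X hs a
                      + sqrt (\<gamma> * real m * ln t / (real (n_plays hs a) + 1)) * z (a, t))}"
proof -
  define \<sigma> where "\<sigma> i = sqrt (\<gamma> * real m * ln t / (real (n_plays hs (fst i)) + 1))" for i :: "'a \<times> nat"
  define D where "D = (\<Sum>a\<in>A. r a - emp_mean X hs a)"
  have inj: "inj_on (\<lambda>a. (a, t)) A" by (auto simp: inj_on_def)
  have L: "ln t \<ge> 1/4"
  proof -
    have "1 / real t \<le> 1/2" using t by simp
    then show ?thesis using one_minus_inverse_le_ln[of t] t by linarith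
  qed
  have m: "m \<ge> 1" using A card_gt_0_iff[of A] by simp
  have "D \<le> sqrt (4/\<gamma>) * sqrt (\<Sum>i\<in>(\<lambda>a. (a, t)) ` A. (\<sigma> i)\<^sup>2)"
    unfolding D_def \<sigma>_def sum.reindex[OF inj] comp_def fst_conv
    by (intro sum_mean_minus_emp_mean_le[OF X A(1,3) r L \<gamma> plays])
  then have "std_normal_cdf (- sqrt (4/\<gamma>)) \<le> measure (PiM K (\<lambda>_. std_normal_distribution))
      {z \<in> space (PiM K (\<lambda>_. std_normal_distribution)). D \<le> (\<Sum>i\<in>(\<lambda>a. (a, t)) ` A. \<sigma> i * z i)}"
    using A \<gamma> L m K by (intro measure_PiM_std_normal_weighted_sum_ge) (auto simp: \<sigma>_def)
  then show ?thesis
    by (simp add: D_def \<sigma>_def sum.reindex[OF inj] sum.distrib sum_subtractf diff_le_eq add.commute)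
qed

lemma prob_noise_ctsg_sample_sum_ge:
  fixes X :: "'a::finite \<times> nat \<Rightarrow> real" and A :: "'a set"
  assumes X: "rewards_concentrated r (ln t) A t X"
    and A: "A \<noteq> {}" "card A \<le> m" and r: "\<And>a. r a \<le> 1" and \<gamma>: "\<gamma> > 0" and t: "t \<ge> 2"
    and sel: "\<And>s. sel s \<in> measurable (PiM UNIV (\<lambda>_. borel)) (count_space UNIV)"
  defines "MZ \<equiv> PiM UNIV (\<lambda>_::'a \<times> nat. std_normal_distribution)"
  shows "std_normal_cdf (- sqrt (4/\<gamma>)) \<le> emeasure MZ
           {Z \<in> space MZ. (\<Sum>a\<in>A. r a) \<le> (\<Sum>a\<in>A. ctsg_sample \<gamma> m X Z (ctsg_hist \<gamma> m sel X Z (t - 1)) t a)}"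
    (is "_ \<le> emeasure MZ ?S")
proof -
  let ?N = "std_normal_distribution"
  \<comment> \<open>fixing the noise on J fixes the history up to round t - 1\<close>
  define J where "J = {i :: 'a \<times> nat. snd i \<noteq> t}"
  define I where "I = {i :: 'a \<times> nat. snd i = t}"
  have JI: "J \<inter> I = {}" "J \<union> I = UNIV" by (auto simp: J_def I_def)
  have [simp]: "(a, t) \<in> I" for a by (simp add: I_def)
  interpret PI: prob_space "PiM I (\<lambda>_. ?N)" by (intro prob_space_PiM prob_space_std_normal)
  have "(\<lambda>Z. Z i) \<in> borel_measurable MZ" for i
    unfolding MZ_def by (simp add: measurable_cong_sets[OF refl, of _ ?N borel])
  then have "?S \<in> sets MZ"
    using borel_measurable_ctsg_sample_sum[of "\<lambda>_. X" MZ "\<lambda>Z. Z", OF _ _ sel]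
    by (simp add: borel_measurable_iff_ge)
  then have S: "?S \<in> sets (PiM (J \<union> I) (\<lambda>_. ?N))" by (simp add: MZ_def JI)
  have "ennreal (std_normal_cdf (- sqrt (4/\<gamma>))) \<le> emeasure (PiM (J \<union> I) (\<lambda>_. ?N)) ?S"
  proof (rule emeasure_PiM_ge_sections[OF prob_space_std_normal JI(1) S])
    fix zJ
    define H where "H = ctsg_hist \<gamma> m sel X (merge J I (zJ, \<lambda>_. 0)) (t - 1)"
    have plays: "n_plays H a < t" for a
      using n_plays_ctsg_hist_le[of \<gamma> m sel X "merge J I (zJ, \<lambda>_. 0)" "t - 1" a] t
      unfolding H_def by linarith
    have "ctsg_hist \<gamma> m sel X (merge J I (zJ, zI)) (t - 1) = H" for zI
      unfolding H_def using t by (intro ctsg_hist_cong) (simp add: J_def I_def merge_def)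
    then have "{zI \<in> space (PiM I (\<lambda>_. ?N)). merge J I (zJ, zI) \<in> ?S}
        = {zI \<in> space (PiM I (\<lambda>_. ?N)). (\<Sum>a\<in>A. r a)
            \<le> (\<Sum>a\<in>A. emp_mean X H a + sqrt (\<gamma> * real m * ln t / (real (n_plays H a) + 1)) * zI (a, t))}"
      by (auto simp: MZ_def space_PiM ctsg_sample_def J_def I_def merge_def)
    then show "ennreal (std_normal_cdf (- sqrt (4/\<gamma>)))
        \<le> emeasure (PiM I (\<lambda>_. ?N)) {zI \<in> space (PiM I (\<lambda>_. ?N)). merge J I (zJ, zI) \<in> ?S}"
      using prob_std_normal_ctsg_sample_sum_ge[OF X finite A r \<gamma> t plays, of I]
      by (simp add: PI.emeasure_eq_measure)
  qed
  then show ?thesis by (simp add: MZ_def JI)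
qed

lemma sets_bandit_space_ctsg_sample_sum:
  fixes p :: "'a::finite \<Rightarrow> real measure"
  assumes p_borel: "\<And>a. sets (p a) = sets borel"
    and sel: "\<And>s. sel s \<in> measurable (PiM UNIV (\<lambda>_. borel)) (count_space UNIV)"
  shows "{\<omega> \<in> space (bandit_space p). R
           \<le> (\<Sum>a\<in>A. ctsg_sample \<gamma> m (fst \<omega>) (snd \<omega>) (ctsg_hist \<gamma> m sel (fst \<omega>) (snd \<omega>) s) t a)}
         \<in> sets (bandit_space p)"
proof -
  have "(\<lambda>\<omega>. fst \<omega> i) \<in> borel_measurable (bandit_space p)" for i
    using measurable_compose[OF measurable_fst measurable_component_singleton[of i UNIV "\<lambda>ak. p (fst ak)"]]
    by (simp add: bandit_space_def measurable_cong_sets[OF refl p_borel])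
  moreover have "(\<lambda>\<omega>. snd \<omega> i) \<in> borel_measurable (bandit_space p)" for i
    using measurable_compose[OF measurable_snd measurable_component_singleton[of i UNIV "\<lambda>_. std_normal_distribution"]]
    by (simp add: bandit_space_def measurable_cong_sets[OF refl, of _ std_normal_distribution borel])
  ultimately show ?thesis
    using borel_measurable_ctsg_sample_sum[where X = fst and Z = snd, OF _ _ sel]
    by (simp add: borel_measurable_iff_ge)
qed

lemma prob_ctsg_sample_sum_ge:
  fixes p :: "'a::finite \<Rightarrow> real measure" and A :: "'a set"
  assumes p_prob: "\<And>a. prob_space (p a)"
    and p_borel: "\<And>a. sets (p a) = sets borel"
    and p_supp: "\<And>a. measure (p a) {0..1} = 1"
    and r_mean: "\<And>a. r a = (\<integral>x. x \<partial>p a)"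
    and sel: "\<And>s. sel s \<in> measurable (PiM UNIV (\<lambda>_. borel)) (count_space UNIV)"
    and \<gamma>: "\<gamma> > 0" and t: "t \<ge> 4" and A: "card A \<le> m" "real m \<le> (real t)\<^sup>2"
  shows "3/4 * std_normal_cdf (- sqrt (4/\<gamma>)) \<le> measure (bandit_space p)
           {\<omega> \<in> space (bandit_space p). (\<Sum>a\<in>A. r a)
              \<le> (\<Sum>a\<in>A. ctsg_sample \<gamma> m (fst \<omega>) (snd \<omega>) (ctsg_hist \<gamma> m sel (fst \<omega>) (snd \<omega>) (t - 1)) t a)}"
    (is "_ \<le> measure _ ?E")
proof -
  let ?MX = "PiM UNIV (\<lambda>ak. p (fst ak))" and ?MZ = "PiM UNIV (\<lambda>_::'a \<times> nat. std_normal_distribution)"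
  define \<Phi> where "\<Phi> = std_normal_cdf (- sqrt (4/\<gamma>))"
  interpret MX: prob_space ?MX by (intro prob_space_PiM p_prob)
  interpret MZ: prob_space ?MZ by (intro prob_space_PiM prob_space_std_normal)
  interpret M: pair_prob_space ?MX ?MZ ..
  have bandit: "bandit_space p = ?MX \<Otimes>\<^sub>M ?MZ" by (simp add: bandit_space_def)
  have space_p: "space (p a) = UNIV" for a using sets_eq_imp_space_eq[OF p_borel[of a]] by simp
  have r: "r a \<le> 1" for a unfolding r_mean by (rule integral_ident_le_1[OF p_prob p_borel p_supp])
  have \<Phi>: "0 < \<Phi>" "\<Phi> \<le> 1"
    using std_normal_cdf_pos prob_space.prob_le_1[OF prob_space_std_normal]
    by (auto simp: \<Phi>_def std_normal_cdf_def cdf_def)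
  show ?thesis
  proof (cases "A = {}")
    case True
    then show ?thesis using \<Phi> by (simp add: bandit M.prob_space \<Phi>_def[symmetric])
  next
    case False
    define G where "G = {X \<in> space ?MX. rewards_concentrated r (ln t) A t X}"
    note good = prob_rewards_concentrated_ge[where p = p and r = r and A = A and t = t,
        OF p_prob p_borel p_supp r_mean finite]
    have E: "?E \<in> sets (?MX \<Otimes>\<^sub>M ?MZ)"
      using sets_bandit_space_ctsg_sample_sum[where p = p and sel = sel, OF p_borel sel]
      by (simp add: bandit)
    have "card A / real t ^ 3 \<le> (real t)\<^sup>2 / real t ^ 3"
      using A t by (intro divide_right_mono) auto
    also have "\<dots> \<le> 1/4" using t by (simp add: power2_eq_square power3_eq_cube field_simps)
    finally have G: "3/4 \<le> measure ?MX G"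
      using good(2) t unfolding G_def by linarith
    have "ennreal \<Phi> * emeasure ?MX G \<le> emeasure (?MX \<Otimes>\<^sub>M ?MZ) ?E"
    proof (rule emeasure_pair_measure_ge_sections[OF MZ.sigma_finite_measure E])
      show "G \<in> sets ?MX" using good(1) t unfolding G_def by simp
      show "ennreal \<Phi> \<le> emeasure ?MZ (Pair X -` ?E)" if "X \<in> G" for X
        using prob_noise_ctsg_sample_sum_ge[of r t A X m \<gamma> sel] that False A t \<gamma> sel r
        by (simp add: G_def \<Phi>_def bandit space_pair_measure space_PiM space_p vimage_def)
    qed
    then have "\<Phi> * measure ?MX G \<le> measure (bandit_space p) ?E"
      using \<Phi> by (simp add: bandit MX.emeasure_eq_measure M.emeasure_eq_measure ennreal_mult'[symmetric])
    moreover have "3/4 * \<Phi> \<le> \<Phi> * measure ?MX G" using G \<Phi> by simp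
    ultimately show ?thesis unfolding \<Phi>_def by linarith
  qed
qed

theorem lemma4:
  fixes p :: "'a::finite \<Rightarrow> real measure"
    and r :: "'a \<Rightarrow> real"
    and \<Theta> :: "'a set set"
    and \<Theta>s :: "nat \<Rightarrow> 'a set set"
    and sel :: "nat \<Rightarrow> ('a \<Rightarrow> real) \<Rightarrow> 'a set"
    and \<gamma> :: real and t :: nat and Astar :: "'a set"
  assumes N2: "CARD('a) \<ge> 2"
    and p_prob: "\<And>a. prob_space (p a)"
    and p_borel: "\<And>a. sets (p a) = sets borel"
    and p_supp: "\<And>a. measure (p a) {0..1} = 1"
    and r_mean: "\<And>a. r a = (\<integral>x. x \<partial>p a)"
    and \<Theta>_ne: "\<Theta> \<noteq> {}"
    and \<Theta>s_sub: "\<And>s. s \<ge> 1 \<Longrightarrow> \<Theta>s s \<subseteq> \<Theta>"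
    and \<Theta>s_ne: "\<And>s. s \<ge> 1 \<Longrightarrow> \<Theta>s s \<noteq> {}"
    and sel_in: "\<And>s w. s \<ge> 1 \<Longrightarrow> sel s w \<in> \<Theta>s s"
    and sel_max: "\<And>s w B. s \<ge> 1 \<Longrightarrow> B \<in> \<Theta>s s \<Longrightarrow> (\<Sum>a\<in>B. w a) \<le> (\<Sum>a\<in>sel s w. w a)"
    and sel_meas: "\<And>s. sel s \<in> measurable (PiM UNIV (\<lambda>_. borel)) (count_space UNIV)"
    and \<gamma>_pos: "\<gamma> > 0"
    and t_ge: "real t \<ge> max (sqrt (real (Max (card ` \<Theta>)))) 4"
    and Astar_in: "Astar \<in> \<Theta>s t"
    and Astar_opt: "\<And>B. B \<in> \<Theta>s t \<Longrightarrow> (\<Sum>a\<in>B. r a) \<le> (\<Sum>a\<in>Astar. r a)"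
  shows "let m = Max (card ` \<Theta>);
             P = measure (bandit_space p)
                   {\<omega> \<in> space (bandit_space p).
                      (\<Sum>a\<in>Astar. ctsg_sample \<gamma> m (fst \<omega>) (snd \<omega>)
                                     (ctsg_hist \<gamma> m sel (fst \<omega>) (snd \<omega>) (t - 1)) t a)
                      \<ge> (\<Sum>a\<in>Astar. r a)}
         in P > 0 \<and> 1 / P \<le> 2 * inverse (std_normal_cdf (- sqrt (4 / \<gamma>)))"
proof -
  \<comment> \<open>of the hypotheses on Astar only card Astar \<le> m is needed, not its optimality\<close>
  define m where "m = Max (card ` \<Theta>)"
  define \<Phi> where "\<Phi> = std_normal_cdf (- sqrt (4 / \<gamma>))"
  let ?P = "measure (bandit_space p) {\<omega> \<in> space (bandit_space p). (\<Sum>a\<in>Astar. r a)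
     \<le> (\<Sum>a\<in>Astar. ctsg_sample \<gamma> m (fst \<omega>) (snd \<omega>) (ctsg_hist \<gamma> m sel (fst \<omega>) (snd \<omega>) (t - 1)) t a)}"
  have t: "t \<ge> 4" using t_ge by simp
  have "card Astar \<le> m"
    using \<Theta>s_sub[of t] t Astar_in by (auto simp: m_def intro!: Max_ge)
  moreover have "real m \<le> (real t)\<^sup>2"
    using power_mono[of "sqrt m" t 2] t_ge by (simp add: m_def)
  ultimately have "3/4 * \<Phi> \<le> ?P"
    unfolding \<Phi>_def by (intro prob_ctsg_sample_sum_ge p_prob p_borel p_supp r_mean sel_meas \<gamma>_pos t)
  moreover have "\<Phi> > 0" unfolding \<Phi>_def by (rule std_normal_cdf_pos)
  ultimately have "?P > 0 \<and> 1 / ?P \<le> 2 * inverse \<Phi>"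
    by (auto simp: field_simps)
  then show ?thesis by (simp add: Let_def m_def \<Phi>_def)
qed

end
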